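(* Let $E=\mathbb{Q}(i,\sqrt5)$, let $\tau=(1+\sqrt5)/2$, and let $\sigma$ be the automorphism of $E$ with $\sigma(i)=i$ and $\sigma(\sqrt5)=-\sqrt5$. For a real number $N\ge 1$ let $\mathbf{L}(N)$ be the set of numbers $x=(a+bi)+(c+di)\tau\in E$ with $a,b,c,d\in\mathbb{Z}$ and $|a|,|b|,|c|,|d|\le N$. For $x_1,x_2\in E$ put $$X(x_1,x_2)=\begin{pmatrix} x_1 & \sigma(x_1)\\ i\,x_2 & \sigma(x_2)\end{pmatrix},\qquad D(N,N)=\min_{x_1,x_2\in\mathbf{L}(N)\setminus\{0\}}\left|\det X(x_1,x_2)\right|.$$ Then $$\limsup_{N\to\infty}\left(-\frac{\log D(N,N)}{\log N}\right)=2.$$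
   Context: This is the two-user single-antenna Badr–Belfiore multiuser MIMO code; $\det X(x_1,x_2)\neq0$ whenever $x_1,x_2\neq0$, so $D(N,N)>0$. *)

theory Defs
  imports "HOL-Analysis.Analysis"
begin

definition Qi :: "complex set" where
  "Qi = {of_real (of_rat r) + of_real (of_rat s) * \<i> | r s. True}"

definition E :: "complex set" where
  "E = {p + q * of_real (sqrt 5) | p q. p \<in> Qi \<and> q \<in> Qi}"

definition sigmaE :: "complex \<Rightarrow> complex" where
  "sigmaE x = (THE y. \<exists>p q. p \<in> Qi \<and> q \<in> Qi \<and> x = p + q * of_real (sqrt 5)
                              \<and> y = p - q * of_real (sqrt 5))"

definition tau :: complex where
  "tau = of_real ((1 + sqrt 5) / 2)"

definition Lset :: "real \<Rightarrow> complex set" where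
  "Lset N = {(of_int a + of_int b * \<i>) + (of_int c + of_int d * \<i>) * tau | a b c d :: int.
               \<bar>real_of_int a\<bar> \<le> N \<and> \<bar>real_of_int b\<bar> \<le> N \<and>
               \<bar>real_of_int c\<bar> \<le> N \<and> \<bar>real_of_int d\<bar> \<le> N}"

definition detX :: "complex \<Rightarrow> complex \<Rightarrow> complex" where
  "detX x1 x2 = x1 * sigmaE x2 - sigmaE x1 * (\<i> * x2)"

definition Dmin :: "real \<Rightarrow> real" where
  "Dmin N = Min {cmod (detX x1 x2) | x1 x2. x1 \<in> Lset N - {0} \<and> x2 \<in> Lset N - {0}}"

end

theory Submission
  imports Defs "HOL-Real_Asymp.Real_Asymp"
begin

text \<open>For nonzero x1, x2 \<in> L(N), d = det X(x1, x2) is a nonzero element of \<int>[i, \<tau>] whose conjugate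
  \<sigma>(d) is O(N^2); as d \<sigma>(d) is a nonzero Gaussian integer, |d| \<ggreater> N^(-2), so the limsup is at most 2.

  Conversely, take x1 \<in> \<int>[\<tau>] and x2 = p (1 - i\<tau>) with p \<in> \<int>[\<tau>]. If x1 \<sigma>(p) = \<tau>^(2u+1) + \<tau>'^(2u),
  then det X(x1, x2) = 2 \<tau>'^(2u) (1 - i\<tau>') has size \<tau>^(-2u). Up to a unit this asks for a
  factorisation of (-\<tau>)^n - 1, n = 4u + 1, into two factors of size about \<tau>^u whose conjugates stay
  small. For n = 105^j, iterating z^105 - 1 = (z - 1) P(z) Q(z) with deg P = deg Q = 52 yields such
  factors of size 151^j \<tau>^u = N^(1+o(1)), while the determinant is \<tau>^(-2u) = N^(-2+o(1)).\<close>

definition phi :: real where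
  "phi = (1 + sqrt 5) / 2"

definition tau' :: complex where
  "tau' = 1 - tau"

lemma sqrt5_bounds: "2 < sqrt (5::real)" "sqrt (5::real) < 3"
  by (simp_all add: real_less_rsqrt real_less_lsqrt)

lemma phi_bounds: "1 < phi" "phi < 2"
  using sqrt5_bounds unfolding phi_def by auto

lemma tau_eq_phi: "tau = of_real phi"
  unfolding tau_def phi_def ..

lemma tau'_eq: "tau' = of_real (1 - phi)"
  unfolding tau'_def tau_eq_phi by simp

lemma tau_sqrt5: "tau = 1/2 + of_real (sqrt 5) / 2" and tau'_sqrt5: "tau' = 1/2 - of_real (sqrt 5) / 2"
  unfolding tau'_def tau_def by (simp_all add: add_divide_distrib)

lemma phi_squared: "phi\<^sup>2 = phi + 1"
  unfolding phi_def power2_eq_square by (simp add: field_simps)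

lemma tau_squared: "tau\<^sup>2 = tau + 1"
  unfolding tau_eq_phi by (metis phi_squared of_real_1 of_real_add of_real_power)

lemma tau'_squared: "tau'\<^sup>2 = tau' + 1"
  using tau_squared unfolding tau'_def power2_eq_square by (simp add: algebra_simps)

lemma tau_mult_tau': "tau * tau' = -1"
  using tau_squared unfolding tau'_def power2_eq_square by (simp add: algebra_simps)

lemma norm_tau: "cmod tau = phi"
  using phi_bounds unfolding tau_eq_phi by simp

lemma norm_tau': "cmod tau' = 1 / phi"
proof -
  have "cmod tau' = phi - 1"
    using phi_bounds unfolding tau'_eq norm_of_real by simp
  moreover have "phi * (phi - 1) = 1"
    using phi_squared by (simp add: power2_eq_square algebra_simps)
  ultimately show ?thesis
    using phi_bounds by (metis eq_divide_eq mult.commute not_one_less_zero order.strict_trans zero_neq_one)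
qed

lemma sqrt5_not_rational: "sqrt 5 \<notin> \<rat>"
proof
  assume "sqrt 5 \<in> \<rat>"
  moreover have "algebraic_int (sqrt 5 :: real)"
    by (intro algebraic_int_sqrt int_imp_algebraic_int) simp
  ultimately have "sqrt 5 \<in> \<int>"
    by (intro rational_algebraic_int_is_int)
  then obtain k where "sqrt 5 = real_of_int k"
    by (elim Ints_cases)
  with sqrt5_bounds have "2 < k" "k < 3"
    by simp_all
  then show False
    by simp
qed

section \<open>The ring \<int>[i, \<tau>] and its conjugation\<close>

lemma rational_mult_sqrt5_eq_rational:
  assumes "r \<in> \<rat>" "s \<in> \<rat>" "r * sqrt 5 = s"
  shows "r = 0"
proof (rule ccontr)
  assume "r \<noteq> 0"
  then have "sqrt 5 = s / r"
    using assms(3) by (simp add: field_simps)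
  with assms(1,2) sqrt5_not_rational show False
    by simp
qed

lemma Qi_iff: "z \<in> Qi \<longleftrightarrow> Re z \<in> \<rat> \<and> Im z \<in> \<rat>"
proof
  assume "Re z \<in> \<rat> \<and> Im z \<in> \<rat>"
  then obtain r s where "Re z = of_rat r" "Im z = of_rat s"
    by (metis Rats_cases)
  then have "z = of_real (of_rat r) + of_real (of_rat s) * \<i>"
    by (simp add: complex_eq_iff)
  then show "z \<in> Qi"
    unfolding Qi_def by blast
qed (auto simp: Qi_def)

lemma Qi_sqrt5_coeff_unique:
  assumes "p \<in> Qi" "q \<in> Qi" "p' \<in> Qi" "q' \<in> Qi"
    and eq: "p + q * of_real (sqrt 5) = p' + q' * of_real (sqrt 5)"
  shows "q = q'"
proof -
  have "(Re q - Re q') * sqrt 5 = Re p' - Re p" "(Im q - Im q') * sqrt 5 = Im p' - Im p"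
    using arg_cong[OF eq, of Re] arg_cong[OF eq, of Im] by (simp_all add: algebra_simps)
  then have "Re q - Re q' = 0" "Im q - Im q' = 0"
    using assms(1-4) unfolding Qi_iff by (metis Rats_diff rational_mult_sqrt5_eq_rational)+
  then show ?thesis
    by (simp add: complex_eq_iff)
qed

lemma sigmaE_eq:
  assumes "p \<in> Qi" "q \<in> Qi"
  shows "sigmaE (p + q * of_real (sqrt 5)) = p - q * of_real (sqrt 5)"
  unfolding sigmaE_def
proof (rule the_equality)
  fix y
  assume "\<exists>p' q'. p' \<in> Qi \<and> q' \<in> Qi \<and> p + q * of_real (sqrt 5) = p' + q' * of_real (sqrt 5)
            \<and> y = p' - q' * of_real (sqrt 5)"
  then obtain p' q' where "p' \<in> Qi" "q' \<in> Qi" and eq: "p + q * of_real (sqrt 5) = p' + q' * of_real (sqrt 5)"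
    and y: "y = p' - q' * of_real (sqrt 5)"
    by blast
  moreover from Qi_sqrt5_coeff_unique[OF assms this(1,2) eq] have "q = q'" .
  ultimately show "y = p - q * of_real (sqrt 5)"
    by simp
qed (use assms in blast)

definition gauss_ints :: "complex set" where
  "gauss_ints = {z. Re z \<in> \<int> \<and> Im z \<in> \<int>}"

lemma gauss_ints_closed [intro]:
  "z \<in> gauss_ints \<Longrightarrow> w \<in> gauss_ints \<Longrightarrow> z + w \<in> gauss_ints"
  "z \<in> gauss_ints \<Longrightarrow> w \<in> gauss_ints \<Longrightarrow> z - w \<in> gauss_ints"
  "z \<in> gauss_ints \<Longrightarrow> w \<in> gauss_ints \<Longrightarrow> z * w \<in> gauss_ints"
  "z \<in> gauss_ints \<Longrightarrow> - z \<in> gauss_ints"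
  "of_int k + of_int l * \<i> \<in> gauss_ints"
  unfolding gauss_ints_def by auto

lemma gauss_intsE:
  assumes "z \<in> gauss_ints"
  obtains k l :: int where "z = of_int k + of_int l * \<i>"
proof -
  from assms obtain k l where "Re z = of_int k" "Im z = of_int l"
    unfolding gauss_ints_def by (auto elim!: Ints_cases)
  then show ?thesis
    by (intro that[of k l]) (simp add: complex_eq_iff)
qed

lemma norm_gauss_int_ge_1:
  assumes "z \<in> gauss_ints" "z \<noteq> 0"
  shows "1 \<le> cmod z"
proof -
  obtain k l where z: "z = of_int k + of_int l * \<i>"
    using assms(1) by (rule gauss_intsE)
  with assms(2) have "1 \<le> k\<^sup>2 + l\<^sup>2"
    by (auto simp: complex_eq_iff power2_eq_square)
       (smt (verit) mult_le_0_iff zero_le_square)+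
  then have "1 \<le> (real_of_int k)\<^sup>2 + (real_of_int l)\<^sup>2"
    by (metis of_int_add of_int_le_iff of_int_1 of_int_power)
  then show ?thesis
    unfolding z cmod_def by simp
qed

definition Zi_tau :: "complex set" where
  "Zi_tau = {a + b * tau | a b. a \<in> gauss_ints \<and> b \<in> gauss_ints}"

lemma Zi_tauI: "a \<in> gauss_ints \<Longrightarrow> b \<in> gauss_ints \<Longrightarrow> a + b * tau \<in> Zi_tau"
  unfolding Zi_tau_def by blast

lemma Zi_tauE:
  assumes "x \<in> Zi_tau"
  obtains a b where "a \<in> gauss_ints" "b \<in> gauss_ints" "x = a + b * tau"
  using assms unfolding Zi_tau_def by blast

lemma golden_mult:
  fixes w :: "'a :: comm_ring_1"
  assumes "w\<^sup>2 = w + 1"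
  shows "(a + b * w) * (c + d * w) = (a * c + b * d) + (a * d + b * c + b * d) * w"
proof -
  have "(a + b * w) * (c + d * w) = a * c + (a * d + b * c) * w + b * d * w\<^sup>2"
    by (simp add: power2_eq_square algebra_simps)
  then show ?thesis
    unfolding assms by (simp add: algebra_simps)
qed

lemma Zi_tau_add:
  assumes "x \<in> Zi_tau" "y \<in> Zi_tau"
  shows "x + y \<in> Zi_tau"
proof -
  obtain a b c d where "a \<in> gauss_ints" "b \<in> gauss_ints" "c \<in> gauss_ints" "d \<in> gauss_ints"
    and "x = a + b * tau" "y = c + d * tau"
    using assms by (metis Zi_tauE)
  then have "x + y = (a + c) + (b + d) * tau" "a + c \<in> gauss_ints" "b + d \<in> gauss_ints"
    by (auto simp: algebra_simps)
  then show ?thesis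
    by (simp add: Zi_tauI)
qed

lemma Zi_tau_of_int: "of_int k \<in> Zi_tau"
  using Zi_tauI[of "of_int k" 0] gauss_ints_closed(5)[of k 0] gauss_ints_closed(5)[of 0 0] by simp

lemma Zi_tau_mult:
  assumes "x \<in> Zi_tau" "y \<in> Zi_tau"
  shows "x * y \<in> Zi_tau"
proof -
  obtain a b c d where "a \<in> gauss_ints" "b \<in> gauss_ints" "c \<in> gauss_ints" "d \<in> gauss_ints"
    and "x = a + b * tau" "y = c + d * tau"
    using assms by (metis Zi_tauE)
  then have "x * y = (a * c + b * d) + (a * d + b * c + b * d) * tau"
    by (simp add: golden_mult[OF tau_squared])
  with \<open>a \<in> gauss_ints\<close> \<open>b \<in> gauss_ints\<close> \<open>c \<in> gauss_ints\<close> \<open>d \<in> gauss_ints\<close> show ?thesis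
    by (simp add: Zi_tauI gauss_ints_closed)
qed

lemma Zi_tau_uminus: "x \<in> Zi_tau \<Longrightarrow> - x \<in> Zi_tau"
  using Zi_tau_mult[OF Zi_tau_of_int[of "-1"]] by simp

lemma Zi_tau_diff: "x \<in> Zi_tau \<Longrightarrow> y \<in> Zi_tau \<Longrightarrow> x - y \<in> Zi_tau"
  using Zi_tau_add[OF _ Zi_tau_uminus] by simp

lemma Zi_tau_ii: "\<i> \<in> Zi_tau"
  using Zi_tauI[of \<i> 0] gauss_ints_closed(5)[of 0 1] gauss_ints_closed(5)[of 0 0] by simp

lemma Zi_tau_tau: "tau \<in> Zi_tau"
  using Zi_tauI[of 0 1] gauss_ints_closed(5)[of 0 0] gauss_ints_closed(5)[of 1 0] by simp

lemma sigmaE_Zi_tau: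
  assumes "a \<in> gauss_ints" "b \<in> gauss_ints"
  shows "sigmaE (a + b * tau) = a + b * tau'"
proof -
  have "a + b / 2 \<in> Qi" "b / 2 \<in> Qi"
    using assms Ints_subset_Rats unfolding Qi_iff gauss_ints_def by (auto intro!: Rats_add Rats_divide)
  moreover have "a + b * tau = (a + b / 2) + b / 2 * of_real (sqrt 5)"
    and "a + b * tau' = (a + b / 2) - b / 2 * of_real (sqrt 5)"
    unfolding tau_sqrt5 tau'_sqrt5 by (simp_all add: algebra_simps)
  ultimately show ?thesis
    by (metis sigmaE_eq)
qed

lemma sigmaE_add:
  assumes "x \<in> Zi_tau" "y \<in> Zi_tau"
  shows "sigmaE (x + y) = sigmaE x + sigmaE y"
proof -
  obtain a b c d where gi: "a \<in> gauss_ints" "b \<in> gauss_ints" "c \<in> gauss_ints" "d \<in> gauss_ints"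
    and x: "x = a + b * tau" and y: "y = c + d * tau"
    using assms by (metis Zi_tauE)
  have "x + y = (a + c) + (b + d) * tau"
    unfolding x y by (simp add: algebra_simps)
  then have "sigmaE (x + y) = (a + c) + (b + d) * tau'"
    using gi by (simp add: sigmaE_Zi_tau gauss_ints_closed)
  then show ?thesis
    unfolding x y sigmaE_Zi_tau[OF gi(1,2)] sigmaE_Zi_tau[OF gi(3,4)] by (simp add: algebra_simps)
qed

lemma sigmaE_mult:
  assumes "x \<in> Zi_tau" "y \<in> Zi_tau"
  shows "sigmaE (x * y) = sigmaE x * sigmaE y"
proof -
  obtain a b c d where gi: "a \<in> gauss_ints" "b \<in> gauss_ints" "c \<in> gauss_ints" "d \<in> gauss_ints"
    and "x = a + b * tau" "y = c + d * tau"
    using assms by (metis Zi_tauE)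
  then have "x * y = (a * c + b * d) + (a * d + b * c + b * d) * tau"
    by (simp add: golden_mult[OF tau_squared])
  then show ?thesis
    using gi \<open>x = a + b * tau\<close> \<open>y = c + d * tau\<close>
    by (simp add: sigmaE_Zi_tau gauss_ints_closed golden_mult[OF tau'_squared])
qed

lemma sigmaE_of_int: "sigmaE (of_int k) = of_int k"
  using sigmaE_Zi_tau[of "of_int k" 0] gauss_ints_closed(5)[of k 0] gauss_ints_closed(5)[of 0 0] by simp

lemma sigmaE_ii: "sigmaE \<i> = \<i>"
  using sigmaE_Zi_tau[of \<i> 0] gauss_ints_closed(5)[of 0 1] gauss_ints_closed(5)[of 0 0] by simp

lemma sigmaE_tau: "sigmaE tau = tau'"
  using sigmaE_Zi_tau[of 0 1] gauss_ints_closed(5)[of 0 0] gauss_ints_closed(5)[of 1 0] by simp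

lemma sigmaE_uminus: "x \<in> Zi_tau \<Longrightarrow> sigmaE (- x) = - sigmaE x"
  using sigmaE_mult[OF Zi_tau_of_int[of "-1"]] sigmaE_of_int[of "-1"] by simp

lemma sigmaE_diff: "x \<in> Zi_tau \<Longrightarrow> y \<in> Zi_tau \<Longrightarrow> sigmaE (x - y) = sigmaE x - sigmaE y"
  using sigmaE_add[OF _ Zi_tau_uminus] sigmaE_uminus by simp

lemma sigmaE_in_Zi_tau_and_involutive:
  assumes "x \<in> Zi_tau"
  shows "sigmaE x \<in> Zi_tau" "sigmaE (sigmaE x) = x"
proof -
  obtain a b where gi: "a \<in> gauss_ints" "b \<in> gauss_ints" and x: "x = a + b * tau"
    using assms by (rule Zi_tauE)
  have s: "sigmaE x = (a + b) + (- b) * tau"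
    unfolding x sigmaE_Zi_tau[OF gi] tau'_def by (simp add: algebra_simps)
  have gi': "a + b \<in> gauss_ints" "- b \<in> gauss_ints"
    using gi by auto
  then show "sigmaE x \<in> Zi_tau"
    unfolding s by (rule Zi_tauI)
  have "sigmaE (sigmaE x) = (a + b) + (- b) * tau'"
    unfolding s by (rule sigmaE_Zi_tau[OF gi'])
  then show "sigmaE (sigmaE x) = x"
    unfolding x tau'_def by (simp add: algebra_simps)
qed

lemma sigmaE_eq_0_iff: "x \<in> Zi_tau \<Longrightarrow> sigmaE x = 0 \<longleftrightarrow> x = 0"
  using sigmaE_in_Zi_tau_and_involutive(2) sigmaE_of_int[of 0] by force

lemma mult_sigmaE_in_gauss_ints:
  assumes "x \<in> Zi_tau"
  shows "x * sigmaE x \<in> gauss_ints"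
proof -
  obtain a b where gi: "a \<in> gauss_ints" "b \<in> gauss_ints" and x: "x = a + b * tau"
    using assms by (rule Zi_tauE)
  have "x * sigmaE x = a * a + a * b * (tau + tau') + b * b * (tau * tau')"
    unfolding x sigmaE_Zi_tau[OF gi] by (simp add: algebra_simps)
  also have "\<dots> = a * a + a * b - b * b"
    unfolding tau_mult_tau' by (simp add: tau'_def)
  finally show ?thesis
    using gi by auto
qed

section \<open>Determinants of nonzero points of L(N) are at least N^(-2) / 72\<close>

lemma Lset_subset_Zi_tau: "Lset N \<subseteq> Zi_tau"
  unfolding Lset_def by (auto intro!: Zi_tauI)

lemma norm_Lset_le:
  assumes "x \<in> Lset N"
  shows "cmod x \<le> 6 * N" "cmod (sigmaE x) \<le> 6 * N"
proof -
  obtain a b c d :: int where x: "x = (of_int a + of_int b * \<i>) + (of_int c + of_int d * \<i>) * tau"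
    and bounds: "\<bar>real_of_int a\<bar> \<le> N" "\<bar>real_of_int b\<bar> \<le> N" "\<bar>real_of_int c\<bar> \<le> N" "\<bar>real_of_int d\<bar> \<le> N"
    using assms unfolding Lset_def by blast
  have N0: "0 \<le> N"
    using bounds(1) by linarith
  have gauss_le: "cmod (of_int k + of_int l * \<i>) \<le> 2 * N"
    if "\<bar>real_of_int k\<bar> \<le> N" "\<bar>real_of_int l\<bar> \<le> N" for k l
    using norm_triangle_ineq[of "of_int k" "of_int l * \<i>"] that by (simp add: norm_mult)
  have "cmod ((of_int a + of_int b * \<i>) + (of_int c + of_int d * \<i>) * w) \<le> 6 * N"
    if "cmod w \<le> 2" for w
  proof -
    have "cmod ((of_int a + of_int b * \<i>) + (of_int c + of_int d * \<i>) * w)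
        \<le> cmod (of_int a + of_int b * \<i>) + cmod (of_int c + of_int d * \<i>) * cmod w"
      using norm_triangle_ineq by (metis norm_mult)
    also have "\<dots> \<le> 2 * N + 2 * N * 2"
      using gauss_le[OF bounds(1,2)] gauss_le[OF bounds(3,4)] that N0
      by (intro add_mono mult_mono) auto
    finally show ?thesis
      by simp
  qed
  moreover have "cmod tau \<le> 2" "cmod tau' \<le> 2"
    using phi_bounds by (simp_all add: norm_tau norm_tau' divide_le_eq)
  moreover have "sigmaE x = (of_int a + of_int b * \<i>) + (of_int c + of_int d * \<i>) * tau'"
    unfolding x by (intro sigmaE_Zi_tau gauss_ints_closed)
  ultimately show "cmod x \<le> 6 * N" "cmod (sigmaE x) \<le> 6 * N"
    unfolding x by simp_all
qed

lemma Zi_tau_in_Lset: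
  assumes "x \<in> Zi_tau" and bound: "2 * (cmod x + cmod (sigmaE x)) \<le> N"
  shows "x \<in> Lset N"
proof -
  obtain \<alpha> \<beta> where gi: "\<alpha> \<in> gauss_ints" "\<beta> \<in> gauss_ints" and x: "x = \<alpha> + \<beta> * tau"
    using assms(1) by (rule Zi_tauE)
  have "x - sigmaE x = (\<alpha> + \<beta> * tau) - (\<alpha> + \<beta> * tau')"
    using x sigmaE_Zi_tau[OF gi] by simp
  then have "x - sigmaE x = \<beta> * of_real (sqrt 5)"
    unfolding tau'_def tau_sqrt5 by (simp add: algebra_simps)
  then have "cmod \<beta> * sqrt 5 \<le> cmod x + cmod (sigmaE x)"
    using norm_triangle_ineq4[of x "sigmaE x"] by (simp add: norm_mult)
  moreover have "cmod \<beta> * 2 \<le> cmod \<beta> * sqrt 5"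
    using sqrt5_bounds by (intro mult_left_mono) auto
  ultimately have \<beta>: "2 * cmod \<beta> \<le> cmod x + cmod (sigmaE x)"
    by linarith
  have "cmod \<alpha> \<le> cmod x + cmod (\<beta> * tau)"
    using norm_triangle_ineq4[of x "\<beta> * tau"] unfolding x by simp
  also have "\<dots> \<le> cmod x + 2 * cmod \<beta>"
    using phi_bounds mult_left_mono[of phi 2 "cmod \<beta>"] by (simp add: norm_mult norm_tau mult.commute)
  finally have \<alpha>: "cmod \<alpha> \<le> 2 * (cmod x + cmod (sigmaE x))"
    using \<beta> norm_ge_zero[of "sigmaE x"] by (smt (verit))
  obtain a b where a: "\<alpha> = of_int a + of_int b * \<i>"
    using gi(1) by (rule gauss_intsE)
  obtain c d where b: "\<beta> = of_int c + of_int d * \<i>"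
    using gi(2) by (rule gauss_intsE)
  have "cmod \<alpha> \<le> N" "cmod \<beta> \<le> N"
    using \<alpha> \<beta> bound norm_ge_zero[of \<beta>] by (smt (verit))+
  then have "\<bar>real_of_int a\<bar> \<le> N" "\<bar>real_of_int b\<bar> \<le> N" "\<bar>real_of_int c\<bar> \<le> N" "\<bar>real_of_int d\<bar> \<le> N"
    using abs_Re_le_cmod[of \<alpha>] abs_Im_le_cmod[of \<alpha>] abs_Re_le_cmod[of \<beta>] abs_Im_le_cmod[of \<beta>]
    unfolding a b by simp_all
  then show ?thesis
    unfolding Lset_def x a b by blast
qed

lemma sigmaE_detX:
  assumes "x1 \<in> Zi_tau" "x2 \<in> Zi_tau"
  shows "detX x1 x2 \<in> Zi_tau" "sigmaE (detX x1 x2) = sigmaE x1 * x2 - x1 * (\<i> * sigmaE x2)"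
proof -
  have "sigmaE x1 \<in> Zi_tau" "sigmaE x2 \<in> Zi_tau" "sigmaE (sigmaE x1) = x1" "sigmaE (sigmaE x2) = x2"
    using assms sigmaE_in_Zi_tau_and_involutive by auto
  with assms Zi_tau_ii show "detX x1 x2 \<in> Zi_tau" "sigmaE (detX x1 x2) = sigmaE x1 * x2 - x1 * (\<i> * sigmaE x2)"
    unfolding detX_def by (simp_all add: Zi_tau_diff Zi_tau_mult sigmaE_diff sigmaE_mult sigmaE_ii)
qed

lemma detX_nonzero:
  assumes "x1 \<in> Zi_tau" "x2 \<in> Zi_tau" "x1 \<noteq> 0" "x2 \<noteq> 0"
  shows "detX x1 x2 \<noteq> 0"
proof
  assume "detX x1 x2 = 0"
  then have e1: "x1 * sigmaE x2 = \<i> * (sigmaE x1 * x2)"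
    unfolding detX_def by (simp add: algebra_simps)
  from \<open>detX x1 x2 = 0\<close> have "sigmaE (detX x1 x2) = 0"
    using sigmaE_of_int[of 0] by simp
  then have e2: "sigmaE x1 * x2 = \<i> * (x1 * sigmaE x2)"
    unfolding sigmaE_detX[OF assms(1,2)] by (simp add: algebra_simps)
  from e1 have "x1 * sigmaE x2 = 0"
    unfolding e2 by (simp add: disj_commute)
  with assms show False
    using sigmaE_eq_0_iff by simp
qed

lemma norm_detX_ge:
  assumes x1: "x1 \<in> Lset N - {0}" and x2: "x2 \<in> Lset N - {0}"
  shows "1 \<le> cmod (detX x1 x2) * (72 * N\<^sup>2)"
proof -
  have Z: "x1 \<in> Zi_tau" "x2 \<in> Zi_tau"
    using x1 x2 Lset_subset_Zi_tau by auto
  define d where "d = detX x1 x2"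
  have "d \<in> Zi_tau" "d \<noteq> 0"
    unfolding d_def using Z x1 x2 by (simp_all add: sigmaE_detX detX_nonzero)
  then have "1 \<le> cmod (d * sigmaE d)"
    using sigmaE_eq_0_iff by (intro norm_gauss_int_ge_1 mult_sigmaE_in_gauss_ints) auto
  also have "\<dots> \<le> cmod d * (72 * N\<^sup>2)"
  proof -
    have "cmod (sigmaE d) \<le> cmod (sigmaE x1) * cmod x2 + cmod x1 * cmod (sigmaE x2)"
      unfolding d_def sigmaE_detX[OF Z] using norm_triangle_ineq4 by (metis norm_mult mult.left_commute norm_ii mult_1)
    also have "\<dots> \<le> (6 * N) * (6 * N) + (6 * N) * (6 * N)"
      using norm_Lset_le x1 x2 order_trans[OF norm_ge_zero norm_Lset_le(1)[of x1 N]]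
      by (intro add_mono mult_mono) auto
    finally show ?thesis
      by (simp add: norm_mult power2_eq_square mult_left_mono)
  qed
  finally show ?thesis
    unfolding d_def .
qed

lemma finite_Lset: "finite (Lset N)"
proof -
  define K where "K = {k :: int. \<bar>real_of_int k\<bar> \<le> N}"
  have "K \<subseteq> {\<lceil>- N\<rceil>..\<lfloor>N\<rfloor>}"
    unfolding K_def by (auto simp: abs_le_iff le_floor_iff ceiling_le_iff)
  then have "finite K"
    by (rule finite_subset) simp
  moreover have "Lset N \<subseteq> (\<lambda>(a, b, c, d). (of_int a + of_int b * \<i>) + (of_int c + of_int d * \<i>) * tau)
                            ` (K \<times> K \<times> K \<times> K)"
  proof
    fix x
    assume "x \<in> Lset N"
    then obtain a b c d where "x = (of_int a + of_int b * \<i>) + (of_int c + of_int d * \<i>) * tau"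
      and "a \<in> K" "b \<in> K" "c \<in> K" "d \<in> K"
      unfolding Lset_def K_def by blast
    then show "x \<in> (\<lambda>(a, b, c, d). (of_int a + of_int b * \<i>) + (of_int c + of_int d * \<i>) * tau)
                  ` (K \<times> K \<times> K \<times> K)"
      by (intro image_eqI[of _ _ "(a, b, c, d)"]) simp_all
  qed
  ultimately show ?thesis
    by (meson finite_SigmaI finite_imageI finite_subset)
qed

lemma Dmin_le:
  assumes "x1 \<in> Lset N - {0}" "x2 \<in> Lset N - {0}"
  shows "Dmin N \<le> cmod (detX x1 x2)"
  unfolding Dmin_def using assms finite_Lset by (intro Min_le finite_image_set2) auto

lemma Dmin_ge:
  assumes "N \<ge> 1"
  shows "1 \<le> Dmin N * (72 * N\<^sup>2)"
proof -
  have "1 \<in> Lset N"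
    unfolding Lset_def using assms
    by (intro CollectI exI[of _ 1] exI[of _ 0]) auto
  then have "cmod (detX 1 1) \<in> {cmod (detX x1 x2) | x1 x2. x1 \<in> Lset N - {0} \<and> x2 \<in> Lset N - {0}}"
    by (intro CollectI exI[of _ 1]) simp
  then have "Dmin N \<in> {cmod (detX x1 x2) | x1 x2. x1 \<in> Lset N - {0} \<and> x2 \<in> Lset N - {0}}"
    unfolding Dmin_def using finite_Lset by (intro Min_in finite_image_set2) auto
  then show ?thesis
    using norm_detX_ge by auto
qed

lemma Dmin_pos: "N \<ge> 1 \<Longrightarrow> 0 < Dmin N"
  using Dmin_ge[of N] by (smt (verit) mult_nonpos_nonneg zero_le_power2)

lemma log_ratio_Dmin_le:
  assumes "N > 1"
  shows "- ln (Dmin N) / ln N \<le> 2 + ln 72 / ln N"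
proof -
  have "1 / (72 * N\<^sup>2) \<le> Dmin N"
    using Dmin_ge[of N] assms by (simp add: field_simps)
  then have "ln (1 / (72 * N\<^sup>2)) \<le> ln (Dmin N)"
    using assms Dmin_pos by simp
  then have "- ln (Dmin N) \<le> 2 * ln N + ln 72"
    using assms by (simp add: ln_div ln_mult ln_realpow)
  then show ?thesis
    using assms by (simp add: field_simps)
qed

lemma Limsup_log_ratio_Dmin_le: "Limsup at_top (\<lambda>N. ereal (- ln (Dmin N) / ln N)) \<le> 2"
proof -
  have "Limsup at_top (\<lambda>N. ereal (- ln (Dmin N) / ln N)) \<le> Limsup at_top (\<lambda>N. ereal (2 + ln 72 / ln N))"
    using eventually_mono[OF eventually_gt_at_top[of 1] log_ratio_Dmin_le]
    by (intro Limsup_mono) simp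
  also have "\<dots> = 2"
  proof (rule lim_imp_Limsup)
    have "((\<lambda>N::real. 2 + ln 72 / ln N) \<longlongrightarrow> 2) at_top"
      by real_asymp
    then show "((\<lambda>N. ereal (2 + ln 72 / ln N)) \<longlongrightarrow> 2) at_top"
      by (simp add: tendsto_ereal)
  qed simp
  finally show ?thesis .
qed

section \<open>Points with determinant of size \<tau>^(-2u)\<close>

lemma Zi_tau_power: "y \<in> Zi_tau \<Longrightarrow> y ^ k \<in> Zi_tau"
  by (induction k) (simp_all add: Zi_tau_mult Zi_tau_of_int[of 1, simplified])

lemma sigmaE_power: "y \<in> Zi_tau \<Longrightarrow> sigmaE (y ^ k) = sigmaE y ^ k"
  by (induction k) (simp_all add: sigmaE_mult Zi_tau_power sigmaE_of_int[of 1, simplified])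

lemma Zi_tau_prod:
  fixes j :: nat
  assumes "\<And>i. i < j \<Longrightarrow> f i \<in> Zi_tau"
  shows "(\<Prod>i<j. f i) \<in> Zi_tau \<and> sigmaE (\<Prod>i<j. f i) = (\<Prod>i<j. sigmaE (f i))"
  using assms
  by (induction j) (simp_all add: Zi_tau_mult sigmaE_mult Zi_tau_of_int[of 1, simplified] sigmaE_of_int[of 1, simplified])

text \<open>Integer polynomials are coefficient lists, constant term first, so that the factorisation
  below can be checked by \<open>code_simp\<close>.\<close>

fun padd :: "int list \<Rightarrow> int list \<Rightarrow> int list" where
  "padd [] ys = ys"
| "padd xs [] = xs"
| "padd (x # xs) (y # ys) = (x + y) # padd xs ys"

fun pmul :: "int list \<Rightarrow> int list \<Rightarrow> int list" where
  "pmul [] ys = []"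
| "pmul (x # xs) ys = padd (map (\<lambda>y. x * y) ys) (0 # pmul xs ys)"

fun peval :: "int list \<Rightarrow> 'a::comm_ring_1 \<Rightarrow> 'a" where
  "peval [] z = 0"
| "peval (c # cs) z = of_int c + z * peval cs z"

lemma peval_padd: "peval (padd xs ys) z = peval xs z + peval ys z"
  by (induction xs ys rule: padd.induct) (auto simp: algebra_simps)

lemma peval_pmul: "peval (pmul xs ys) z = peval xs z * peval ys z"
proof (induction xs)
  case (Cons x xs)
  have "peval (map ((*) x) ys) z = of_int x * peval ys z"
    by (induction ys) (auto simp: algebra_simps)
  with Cons show ?case
    by (simp add: peval_padd algebra_simps)
qed simp

lemma peval_monomial: "peval (replicate k 0 @ [1]) z = z ^ k"
  by (induction k) auto

lemma Zi_tau_peval: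
  assumes "y \<in> Zi_tau"
  shows "peval cs y \<in> Zi_tau \<and> sigmaE (peval cs y) = peval cs (sigmaE y)"
  by (induction cs) (use assms in \<open>simp_all add: Zi_tau_add Zi_tau_mult Zi_tau_of_int
      sigmaE_add sigmaE_mult sigmaE_of_int Zi_tau_of_int[of 0, simplified] sigmaE_of_int[of 0, simplified]\<close>)

lemma norm_peval_le:
  fixes y :: complex
  shows "cmod (peval cs y) \<le> (\<Sum>c\<leftarrow>cs. \<bar>real_of_int c\<bar>) * max 1 (cmod y) ^ (length cs - 1)"
proof (induction cs)
  case (Cons c ds)
  define M where "M = max 1 (cmod y)"
  have M: "1 \<le> M" "cmod y \<le> M"
    unfolding M_def by auto
  show ?case
  proof (cases ds)
    case (Cons d es)
    have "cmod (peval (c # ds) y) \<le> \<bar>real_of_int c\<bar> + cmod y * cmod (peval ds y)"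
      using norm_triangle_ineq[of "of_int c" "y * peval ds y"] by (simp add: norm_mult)
    also have "\<dots> \<le> \<bar>real_of_int c\<bar> * M ^ length ds + M * ((\<Sum>c\<leftarrow>ds. \<bar>real_of_int c\<bar>) * M ^ (length ds - 1))"
    proof (rule add_mono)
      show "\<bar>real_of_int c\<bar> \<le> \<bar>real_of_int c\<bar> * M ^ length ds"
        using one_le_power[OF M(1)] by (simp add: mult_le_cancel_left1)
      show "cmod y * cmod (peval ds y) \<le> M * ((\<Sum>c\<leftarrow>ds. \<bar>real_of_int c\<bar>) * M ^ (length ds - 1))"
        using Cons.IH M by (intro mult_mono) (auto simp: M_def)
    qed
    also have "\<dots> = (\<Sum>c\<leftarrow>c # ds. \<bar>real_of_int c\<bar>) * M ^ (length (c # ds) - 1)"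
      using Cons by (simp add: algebra_simps)
    finally show ?thesis
      unfolding M_def .
  qed simp
qed simp

lemma norm_prod_peval_le:
  fixes y :: complex
  shows "cmod (\<Prod>i<j. peval cs (y ^ m ^ i))
           \<le> (\<Sum>c\<leftarrow>cs. \<bar>real_of_int c\<bar>) ^ j * max 1 (cmod y) ^ ((length cs - 1) * (\<Sum>i<j. m ^ i))"
proof (induction j)
  case (Suc j)
  define S where "S = (\<Sum>c\<leftarrow>cs. \<bar>real_of_int c\<bar>)"
  define M where "M = max 1 (cmod y)"
  have S: "0 \<le> S"
    unfolding S_def by (induction cs) auto
  have "max 1 (cmod (y ^ m ^ j)) \<le> M ^ m ^ j"
    unfolding M_def norm_power by (intro max.boundedI one_le_power power_mono) auto
  then have "cmod (peval cs (y ^ m ^ j)) \<le> S * (M ^ m ^ j) ^ (length cs - 1)"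
    using norm_peval_le[of cs "y ^ m ^ j"] S unfolding S_def
    by (smt (verit, best) mult_left_mono power_mono norm_ge_zero max.cobounded1)
  then have "cmod (\<Prod>i<Suc j. peval cs (y ^ m ^ i))
      \<le> (S ^ j * M ^ ((length cs - 1) * (\<Sum>i<j. m ^ i))) * (S * (M ^ m ^ j) ^ (length cs - 1))"
    using Suc.IH S unfolding S_def M_def by (simp add: norm_mult mult_mono)
  also have "\<dots> = S ^ Suc j * M ^ ((length cs - 1) * (\<Sum>i<Suc j. m ^ i))"
    by (simp add: power_add power_mult[symmetric] algebra_simps)
  finally show ?case
    unfolding S_def M_def .
qed simp

text \<open>P105 = \<Phi>5 \<Phi>105 and Q105 = \<Phi>3 \<Phi>7 \<Phi>15 \<Phi>21 \<Phi>35: the cyclotomic factors of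
  (z^105 - 1) / (z - 1), split into two halves of degree 52.\<close>

definition P105 :: "int list" where
  "P105 = [1, 2, 3, 3, 3, 1, -1, -4, -5, -6, -5, -4, -1, 1, 3, 4, 5, 5, 4, 3, 1, 0, -2, -2, -3, -2, -3,
           -2, -3, -2, -2, 0, 1, 3, 4, 5, 5, 4, 3, 1, -1, -4, -5, -6, -5, -4, -1, 1, 3, 3, 3, 2, 1]"

definition Q105 :: "int list" where
  "Q105 = [1, -1, 0, 1, -1, 2, -1, 0, 1, -1, 3, -2, 1, 1, -1, 3, -2, 2, 0, 0, 3, -3, 3, 0, 0, 3, -3,
           3, 0, 0, 3, -3, 3, 0, 0, 2, -2, 3, -1, 1, 1, -2, 3, -1, 1, 0, -1, 2, -1, 1, 0, -1, 1]"

lemma P105_Q105_factorisation: "(z - 1) * peval P105 z * peval Q105 z = z ^ 105 - (1 :: 'a :: comm_ring_1)"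
proof -
  have "pmul [-1, 1] (pmul P105 Q105) = -1 # replicate 104 0 @ [1]"
    unfolding P105_def Q105_def by code_simp
  then have "peval (pmul [-1, 1] (pmul P105 Q105)) z = - 1 + z * z ^ 104"
    by (simp only: peval.simps peval_monomial) simp
  also have "\<dots> = z ^ 105 - 1"
    using power_Suc[of z 104] by simp
  finally have "peval (pmul [-1, 1] (pmul P105 Q105)) z = z ^ 105 - 1" .
  moreover have "peval (pmul [-1, 1] (pmul P105 Q105)) z = (z - 1) * peval P105 z * peval Q105 z"
    by (simp only: peval_pmul) (simp add: mult.assoc)
  ultimately show ?thesis
    by simp
qed

lemma P105_Q105_size:
  "(\<Sum>c\<leftarrow>P105. \<bar>real_of_int c\<bar>) = 151" "length P105 = 53"
  "(\<Sum>c\<leftarrow>Q105. \<bar>real_of_int c\<bar>) = 75" "length Q105 = 53"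
  unfolding P105_def Q105_def by simp_all

definition Gpoly :: "nat \<Rightarrow> complex \<Rightarrow> complex" where
  "Gpoly j y = (\<Prod>i<j. peval P105 (y ^ 105 ^ i))"

definition Hpoly :: "nat \<Rightarrow> complex \<Rightarrow> complex" where
  "Hpoly j y = (y - 1) * (\<Prod>i<j. peval Q105 (y ^ 105 ^ i))"

lemma Gpoly_mult_Hpoly: "Gpoly j y * Hpoly j y = y ^ 105 ^ j - 1"
proof (induction j)
  case (Suc j)
  have "Gpoly (Suc j) y * Hpoly (Suc j) y
      = (Gpoly j y * Hpoly j y) * (peval P105 (y ^ 105 ^ j) * peval Q105 (y ^ 105 ^ j))"
    unfolding Gpoly_def Hpoly_def by (simp add: algebra_simps)
  also have "\<dots> = (y ^ 105 ^ j) ^ 105 - 1"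
    using P105_Q105_factorisation[of "y ^ 105 ^ j"] unfolding Suc.IH by (simp add: algebra_simps)
  finally show ?case
    by (simp add: power_mult[symmetric] mult.commute)
qed (simp add: Gpoly_def Hpoly_def)

lemma Zi_tau_Gpoly_Hpoly:
  assumes "y \<in> Zi_tau"
  shows "Gpoly j y \<in> Zi_tau" "sigmaE (Gpoly j y) = Gpoly j (sigmaE y)"
    and "Hpoly j y \<in> Zi_tau" "sigmaE (Hpoly j y) = Hpoly j (sigmaE y)"
proof -
  have P: "\<And>i. peval P105 (y ^ 105 ^ i) \<in> Zi_tau" and Q: "\<And>i. peval Q105 (y ^ 105 ^ i) \<in> Zi_tau"
    using Zi_tau_peval Zi_tau_power assms by blast+
  have \<sigma>P: "sigmaE (peval P105 (y ^ 105 ^ i)) = peval P105 (sigmaE y ^ 105 ^ i)"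
    and \<sigma>Q: "sigmaE (peval Q105 (y ^ 105 ^ i)) = peval Q105 (sigmaE y ^ 105 ^ i)" for i
    using Zi_tau_peval[OF Zi_tau_power[OF assms]] sigmaE_power[OF assms] by simp_all
  show "Gpoly j y \<in> Zi_tau" "sigmaE (Gpoly j y) = Gpoly j (sigmaE y)"
    unfolding Gpoly_def using Zi_tau_prod[OF P] by (simp_all add: \<sigma>P)
  have "y - 1 \<in> Zi_tau" "sigmaE (y - 1) = sigmaE y - 1"
    using assms Zi_tau_diff Zi_tau_of_int[of 1] sigmaE_diff sigmaE_of_int[of 1] by auto
  then show "Hpoly j y \<in> Zi_tau" "sigmaE (Hpoly j y) = Hpoly j (sigmaE y)"
    unfolding Hpoly_def using Zi_tau_prod[OF Q] by (simp_all add: Zi_tau_mult sigmaE_mult \<sigma>Q)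
qed

lemma geometric_sum_105: "104 * (\<Sum>i<j. 105 ^ i) + 1 = (105 ^ j :: nat)"
  by (induction j) simp_all

lemma norm_Gpoly_Hpoly_le:
  assumes "4 * u + 1 = 105 ^ j"
  shows "cmod (Gpoly j y) \<le> 151 ^ j * max 1 (cmod y) ^ (2 * u)"
    and "cmod (Hpoly j y) \<le> (cmod y + 1) * 75 ^ j * max 1 (cmod y) ^ (2 * u)"
proof -
  have "52 * (\<Sum>i<j. 105 ^ i) = 2 * u"
    using geometric_sum_105[of j] assms by linarith
  then have "(length P105 - 1) * (\<Sum>i<j. 105 ^ i) = 2 * u" "(length Q105 - 1) * (\<Sum>i<j. 105 ^ i) = 2 * u"
    by (simp_all add: P105_Q105_size)
  then show "cmod (Gpoly j y) \<le> 151 ^ j * max 1 (cmod y) ^ (2 * u)"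
    and "cmod (Hpoly j y) \<le> (cmod y + 1) * 75 ^ j * max 1 (cmod y) ^ (2 * u)"
    using norm_prod_peval_le[where cs = P105 and m = 105] norm_prod_peval_le[where cs = Q105 and m = 105]
      norm_triangle_ineq4[of y 1]
    unfolding Gpoly_def Hpoly_def P105_Q105_size norm_mult mult.assoc
    by (auto intro!: mult_mono)
qed

lemma Gpoly_Hpoly_nonzero:
  assumes "cmod y \<noteq> 1"
  shows "Gpoly j y \<noteq> 0" "Hpoly j y \<noteq> 0"
  using Gpoly_mult_Hpoly[of j y] power_eq_1_iff[of y "105 ^ j"] assms by auto

definition witness_x1 :: "nat \<Rightarrow> nat \<Rightarrow> complex" where
  "witness_x1 j u = Gpoly j (- tau) * (- tau') ^ u"

definition witness_x2 :: "nat \<Rightarrow> nat \<Rightarrow> complex" where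
  "witness_x2 j u = - ((- tau) ^ u * Hpoly j (- tau')) * (1 - \<i> * tau)"

lemma Zi_tau_minus_tau:
  "- tau \<in> Zi_tau" "- tau' \<in> Zi_tau" "sigmaE (- tau) = - tau'" "sigmaE (- tau') = - tau"
proof -
  have "tau' \<in> Zi_tau" "sigmaE tau' = tau"
    using sigmaE_in_Zi_tau_and_involutive[OF Zi_tau_tau] by (simp_all add: sigmaE_tau)
  then show "- tau \<in> Zi_tau" "- tau' \<in> Zi_tau" "sigmaE (- tau) = - tau'" "sigmaE (- tau') = - tau"
    using Zi_tau_tau by (simp_all add: Zi_tau_uminus sigmaE_uminus sigmaE_tau)
qed

lemma sigmaE_witness:
  shows "witness_x1 j u \<in> Zi_tau" "sigmaE (witness_x1 j u) = Gpoly j (- tau') * (- tau) ^ u"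
    and "witness_x2 j u \<in> Zi_tau"
    and "sigmaE (witness_x2 j u) = - ((- tau') ^ u * Hpoly j (- tau)) * (1 - \<i> * tau')"
proof -
  have one_i_tau: "1 - \<i> * tau \<in> Zi_tau" "sigmaE (1 - \<i> * tau) = 1 - \<i> * tau'"
    using Zi_tau_of_int[of 1] Zi_tau_ii Zi_tau_tau
    by (simp_all add: Zi_tau_diff Zi_tau_mult sigmaE_diff sigmaE_mult sigmaE_ii sigmaE_tau
        sigmaE_of_int[of 1, simplified])
  show "witness_x1 j u \<in> Zi_tau" "sigmaE (witness_x1 j u) = Gpoly j (- tau') * (- tau) ^ u"
    unfolding witness_x1_def using Zi_tau_minus_tau Zi_tau_Gpoly_Hpoly
    by (simp_all add: Zi_tau_mult Zi_tau_power sigmaE_mult sigmaE_power)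
  show "witness_x2 j u \<in> Zi_tau"
    "sigmaE (witness_x2 j u) = - ((- tau') ^ u * Hpoly j (- tau)) * (1 - \<i> * tau')"
    unfolding witness_x2_def using Zi_tau_minus_tau Zi_tau_Gpoly_Hpoly one_i_tau
    by (simp_all add: Zi_tau_mult Zi_tau_power Zi_tau_uminus sigmaE_mult sigmaE_power sigmaE_uminus)
qed

lemma Gpoly_Hpoly_twisted:
  assumes "y * y' = -1" "4 * u + 1 = 105 ^ j"
  shows "- (Gpoly j y * Hpoly j y * y' ^ (2 * u)) = y' ^ (2 * u) - y ^ (2 * u + 1)"
proof -
  have "4 * u + 1 = (2 * u + 1) + 2 * u"
    by simp
  then have "y ^ (4 * u + 1) * y' ^ (2 * u) = y ^ (2 * u + 1) * (y * y') ^ (2 * u)"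
    by (simp only: power_add power_mult_distrib mult.assoc)
  then have e: "y ^ (4 * u + 1) * y' ^ (2 * u) = y ^ (2 * u + 1)"
    unfolding assms(1) by simp
  have "- (Gpoly j y * Hpoly j y * y' ^ (2 * u)) = y' ^ (2 * u) - y ^ (4 * u + 1) * y' ^ (2 * u)"
    unfolding Gpoly_mult_Hpoly assms(2)[symmetric] by (simp add: algebra_simps)
  then show ?thesis
    unfolding e .
qed

lemma golden_det_identity:
  "(tau * T + T') * (1 - \<i> * tau') - \<i> * (tau' * T' + T) * (1 - \<i> * tau) = 2 * T' * (1 - \<i> * tau')"
proof -
  have "\<i> * \<i> = (-1 :: complex)" "tau * tau' = -1"
    by (simp_all add: tau_mult_tau')
  then show ?thesis
    by algebra
qed

lemma detX_witness:
  assumes "4 * u + 1 = 105 ^ j"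
  shows "detX (witness_x1 j u) (witness_x2 j u) = 2 * tau' ^ (2 * u) * (1 - \<i> * tau')"
proof -
  have minus_tau: "(- tau) * (- tau') = -1" "(- tau') * (- tau) = -1"
    using tau_mult_tau' by (simp_all add: mult.commute)
  have "witness_x1 j u * (- ((- tau') ^ u * Hpoly j (- tau)))
        = - (Gpoly j (- tau) * Hpoly j (- tau) * (- tau') ^ (2 * u))"
    unfolding witness_x1_def by (simp only: mult_2 power_add) algebra
  also have "\<dots> = tau * tau ^ (2 * u) + tau' ^ (2 * u)"
    unfolding Gpoly_Hpoly_twisted[OF minus_tau(1) assms] by simp
  finally have A: "witness_x1 j u * (- ((- tau') ^ u * Hpoly j (- tau))) = tau * tau ^ (2 * u) + tau' ^ (2 * u)" .
  have "Gpoly j (- tau') * (- tau) ^ u * (- ((- tau) ^ u * Hpoly j (- tau')))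
        = - (Gpoly j (- tau') * Hpoly j (- tau') * (- tau) ^ (2 * u))"
    by (simp only: mult_2 power_add) algebra
  also have "\<dots> = tau' * tau' ^ (2 * u) + tau ^ (2 * u)"
    unfolding Gpoly_Hpoly_twisted[OF minus_tau(2) assms] by simp
  finally have B: "Gpoly j (- tau') * (- tau) ^ u * (- ((- tau) ^ u * Hpoly j (- tau')))
      = tau' * tau' ^ (2 * u) + tau ^ (2 * u)" .
  have "detX (witness_x1 j u) (witness_x2 j u)
      = (witness_x1 j u * (- ((- tau') ^ u * Hpoly j (- tau)))) * (1 - \<i> * tau')
        - \<i> * (Gpoly j (- tau') * (- tau) ^ u * (- ((- tau) ^ u * Hpoly j (- tau')))) * (1 - \<i> * tau)"
    unfolding detX_def sigmaE_witness by (simp add: witness_x2_def algebra_simps)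
  also have "\<dots> = 2 * tau' ^ (2 * u) * (1 - \<i> * tau')"
    unfolding A B by (rule golden_det_identity)
  finally show ?thesis .
qed

lemma norm_detX_witness_le:
  assumes "4 * u + 1 = 105 ^ j"
  shows "cmod (detX (witness_x1 j u) (witness_x2 j u)) \<le> 4 / phi ^ (2 * u)"
proof -
  have "cmod (1 - \<i> * tau') \<le> 1 + cmod tau'"
    using norm_triangle_ineq4[of 1 "\<i> * tau'"] by (simp add: norm_mult)
  also have "\<dots> \<le> 2"
    using phi_bounds by (simp add: norm_tau')
  finally have "2 * (1 / phi) ^ (2 * u) * cmod (1 - \<i> * tau') \<le> 2 * (1 / phi) ^ (2 * u) * 2"
    by (intro mult_left_mono) auto
  moreover have "cmod (2 * tau' ^ (2 * u) * (1 - \<i> * tau')) = 2 * (1 / phi) ^ (2 * u) * cmod (1 - \<i> * tau')"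
    by (simp add: norm_mult norm_power norm_tau')
  ultimately show ?thesis
    unfolding detX_witness[OF assms] by (simp add: power_one_over)
qed

lemma witness_nonzero: "witness_x1 j u \<noteq> 0" "witness_x2 j u \<noteq> 0"
proof -
  have "cmod (- tau) \<noteq> 1" "cmod (- tau') \<noteq> 1" "tau \<noteq> 0" "tau' \<noteq> 0"
    using phi_bounds norm_tau norm_tau' by auto
  moreover have "1 - \<i> * tau \<noteq> 0"
    using arg_cong[of _ _ Re] unfolding tau_eq_phi by fastforce
  ultimately show "witness_x1 j u \<noteq> 0" "witness_x2 j u \<noteq> 0"
    unfolding witness_x1_def witness_x2_def using Gpoly_Hpoly_nonzero by auto
qed

lemma phi_power_cancel: "phi ^ (2 * u) * (1 / phi) ^ u = phi ^ u"
proof -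
  have "phi ^ (2 * u) * (1 / phi) ^ u = phi ^ u * (phi * (1 / phi)) ^ u"
    by (simp only: mult_2 power_add power_mult_distrib mult.assoc)
  then show ?thesis
    using phi_bounds by simp
qed

lemma norm_witness_x1_le:
  assumes "4 * u + 1 = 105 ^ j"
  shows "cmod (witness_x1 j u) \<le> 151 ^ j * phi ^ u" "cmod (sigmaE (witness_x1 j u)) \<le> 151 ^ j * phi ^ u"
proof -
  note G = norm_Gpoly_Hpoly_le(1)[OF assms]
  have "cmod (witness_x1 j u) \<le> 151 ^ j * phi ^ (2 * u) * (1 / phi) ^ u"
    unfolding witness_x1_def norm_mult norm_power using G[of "- tau"] phi_bounds
    by (auto simp: norm_tau norm_tau' intro: mult_right_mono)
  then show "cmod (witness_x1 j u) \<le> 151 ^ j * phi ^ u"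
    by (simp only: mult.assoc phi_power_cancel)
  show "cmod (sigmaE (witness_x1 j u)) \<le> 151 ^ j * phi ^ u"
    unfolding sigmaE_witness norm_mult norm_power using G[of "- tau'"] phi_bounds
    by (auto simp: norm_tau norm_tau' intro: mult_right_mono)
qed

lemma norm_witness_x2_le:
  assumes "4 * u + 1 = 105 ^ j"
  shows "cmod (witness_x2 j u) \<le> 6 * 75 ^ j * phi ^ u"
    and "cmod (sigmaE (witness_x2 j u)) \<le> 6 * 75 ^ j * phi ^ u"
proof -
  note H = norm_Gpoly_Hpoly_le(2)[OF assms]
  have "1 / phi \<le> 1"
    using phi_bounds by simp
  moreover have "cmod (1 - \<i> * tau) \<le> 1 + phi" "cmod (1 - \<i> * tau') \<le> 1 + 1 / phi"
    using norm_triangle_ineq4[of 1 "\<i> * tau"] norm_triangle_ineq4[of 1 "\<i> * tau'"]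
    by (simp_all add: norm_mult norm_tau norm_tau')
  ultimately have one_i: "cmod (1 - \<i> * tau) \<le> 3" "cmod (1 - \<i> * tau') \<le> 2"
    using phi_bounds by linarith+
  have "cmod (Hpoly j (- tau')) \<le> (1 / phi + 1) * 75 ^ j"
    using H[of "- tau'"] phi_bounds by (simp add: norm_tau')
  also have "\<dots> \<le> 2 * 75 ^ j"
    using phi_bounds by (intro mult_right_mono) auto
  finally have "cmod (witness_x2 j u) \<le> phi ^ u * (2 * 75 ^ j) * 3"
    unfolding witness_x2_def norm_mult norm_power norm_minus_cancel norm_tau
    using one_i phi_bounds by (intro mult_mono) auto
  then show "cmod (witness_x2 j u) \<le> 6 * 75 ^ j * phi ^ u"
    by (simp add: algebra_simps)
  have "cmod (Hpoly j (- tau)) \<le> (phi + 1) * 75 ^ j * phi ^ (2 * u)"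
    using H[of "- tau"] phi_bounds by (simp add: norm_tau)
  also have "\<dots> \<le> 3 * 75 ^ j * phi ^ (2 * u)"
    using phi_bounds by (intro mult_right_mono) auto
  finally have "cmod (sigmaE (witness_x2 j u)) \<le> (1 / phi) ^ u * (3 * 75 ^ j * phi ^ (2 * u)) * 2"
    unfolding sigmaE_witness norm_mult norm_power norm_minus_cancel norm_tau'
    using one_i phi_bounds by (intro mult_mono) auto
  also have "\<dots> = 6 * 75 ^ j * (phi ^ (2 * u) * (1 / phi) ^ u)"
    by (simp only: ac_simps)
  also have "\<dots> = 6 * 75 ^ j * phi ^ u"
    by (simp only: phi_power_cancel)
  finally show "cmod (sigmaE (witness_x2 j u)) \<le> 6 * 75 ^ j * phi ^ u" .
qed

lemma witness_in_Lset:
  assumes "4 * u + 1 = 105 ^ j"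
  shows "witness_x1 j u \<in> Lset (24 * 151 ^ j * phi ^ u)" "witness_x2 j u \<in> Lset (24 * 151 ^ j * phi ^ u)"
proof -
  define B where "B = 151 ^ j * phi ^ u"
  have "0 \<le> phi ^ u" "(75::real) ^ j \<le> 151 ^ j"
    using phi_bounds by (simp_all add: power_mono)
  then have B: "0 \<le> B" "6 * 75 ^ j * phi ^ u \<le> 6 * B"
    unfolding B_def by (simp_all add: mult_right_mono)
  have "cmod (witness_x1 j u) \<le> B" "cmod (sigmaE (witness_x1 j u)) \<le> B"
    using norm_witness_x1_le[OF assms] unfolding B_def .
  moreover have "cmod (witness_x2 j u) \<le> 6 * B" "cmod (sigmaE (witness_x2 j u)) \<le> 6 * B"
    using norm_witness_x2_le[OF assms] B(2) by linarith+
  ultimately have "2 * (cmod (witness_x1 j u) + cmod (sigmaE (witness_x1 j u))) \<le> 24 * B"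
    "2 * (cmod (witness_x2 j u) + cmod (sigmaE (witness_x2 j u))) \<le> 24 * B"
    using B(1) unfolding distrib_left by linarith+
  then show "witness_x1 j u \<in> Lset (24 * 151 ^ j * phi ^ u)" "witness_x2 j u \<in> Lset (24 * 151 ^ j * phi ^ u)"
    unfolding B_def mult.assoc using sigmaE_witness by (simp_all add: Zi_tau_in_Lset)
qed

lemma Limsup_compose_filterlim_le:
  assumes "filterlim g G F"
  shows "Limsup F (\<lambda>x. f (g x)) \<le> Limsup G f"
proof -
  have "Limsup F (\<lambda>x. f (g x)) \<le> Limsup (filtermap g F) f"
    by (rule Limsup_filtermap_ge)
  also have "\<dots> \<le> Limsup G f"
    using assms unfolding filterlim_def Limsup_def le_filter_def
    by (intro INF_superset_mono) auto
  finally show ?thesis .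
qed

lemma log_ratio_Dmin_witness_ge:
  assumes "4 * u + 1 = 105 ^ j"
  defines "N \<equiv> 24 * 151 ^ j * phi ^ u"
  shows "(2 * real u * ln phi - ln 4) / (ln 24 + real j * ln 151 + real u * ln phi) \<le> - ln (Dmin N) / ln N"
proof -
  have "1 \<le> phi ^ u" "(1::real) \<le> 151 ^ j"
    using phi_bounds by simp_all
  then have N: "1 \<le> N"
    unfolding N_def by (smt (verit) mult_le_cancel_left1)
  have lnN: "ln N = ln 24 + real j * ln 151 + real u * ln phi"
    unfolding N_def using phi_bounds by (simp add: ln_mult ln_realpow)
  have "0 \<le> real u * ln phi"
    using phi_bounds by simp
  then have lnN_pos: "0 < ln N"
    unfolding lnN by (smt (verit) ln_ge_zero ln_gt_zero of_nat_0_le_iff mult_nonneg_nonneg)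
  have "Dmin N \<le> 4 / phi ^ (2 * u)"
    using Dmin_le[of "witness_x1 j u" N "witness_x2 j u"] witness_in_Lset[OF assms(1)] witness_nonzero
      norm_detX_witness_le[OF assms(1)] unfolding N_def by fastforce
  then have "ln (Dmin N) \<le> ln (4 / phi ^ (2 * u))"
    using Dmin_pos[OF N] phi_bounds by (subst ln_le_cancel_iff) auto
  also have "\<dots> = ln 4 - 2 * real u * ln phi"
    using phi_bounds by (simp add: ln_div ln_realpow)
  finally have "ln (Dmin N) \<le> ln 4 - 2 * real u * ln phi" .
  then show ?thesis
    unfolding lnN[symmetric] using lnN_pos by (intro divide_right_mono) auto
qed

lemma Limsup_log_ratio_Dmin_ge: "2 \<le> Limsup at_top (\<lambda>N. ereal (- ln (Dmin N) / ln N))"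
proof -
  define u :: "nat \<Rightarrow> nat" where "u j = 26 * (\<Sum>i<j. 105 ^ i)" for j
  have u: "4 * u j + 1 = 105 ^ j" for j
    using geometric_sum_105[of j] unfolding u_def by linarith
  have real_u: "real (u j) = (105 ^ j - 1) / 4" for j
    using arg_cong[OF u[of j], of real] by simp
  define N where "N j = 24 * 151 ^ j * phi ^ u j" for j
  define g where "g j = (2 * real (u j) * ln phi - ln 4) / (ln 24 + real j * ln 151 + real (u j) * ln phi)" for j
  have "filterlim (\<lambda>j. 24 * 151 ^ j :: real) at_top sequentially"
    by real_asymp
  moreover have "\<forall>j. 24 * 151 ^ j \<le> N j"
    unfolding N_def using phi_bounds by (simp add: mult_le_cancel_left1)
  ultimately have N_lim: "filterlim N at_top sequentially"
    by (blast intro: filterlim_at_top_mono always_eventually)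
  have "\<And>L :: real. 0 < L \<Longrightarrow>
    ((\<lambda>j. (2 * ((105 ^ j - 1) / 4) * L - ln 4) / (ln 24 + real j * ln 151 + (105 ^ j - 1) / 4 * L))
      \<longlongrightarrow> 2) sequentially"
    by real_asymp
  then have "(g \<longlongrightarrow> 2) sequentially"
    unfolding g_def real_u using phi_bounds by simp
  then have "2 = Limsup sequentially (\<lambda>j. ereal (g j))"
    by (intro lim_imp_Limsup[symmetric]) (simp_all add: tendsto_ereal)
  also have "\<dots> \<le> Limsup sequentially (\<lambda>j. ereal (- ln (Dmin (N j)) / ln (N j)))"
    unfolding g_def N_def using log_ratio_Dmin_witness_ge[OF u] by (intro Limsup_mono always_eventually) simp
  also have "\<dots> \<le> Limsup at_top (\<lambda>N. ereal (- ln (Dmin N) / ln N))"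
    using N_lim by (rule Limsup_compose_filterlim_le)
  finally show ?thesis .
qed

theorem corollary3p3:
  shows "Limsup at_top (\<lambda>N::real. ereal (- ln (Dmin N) / ln N)) = 2"
  using Limsup_log_ratio_Dmin_le Limsup_log_ratio_Dmin_ge by (rule antisym)

end
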